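(* If $\gamma$ is an edge path in the 1-skeleton of $K$ of length $n$ which has minimal length among edge paths joining its endpoints, then its subdivision $\omega(\gamma)$ is an edge path in the 1-skeleton of $\omega(K)$ of length $2n$ which has minimal length among edge paths in $\omega(K)$ joining its endpoints.
   Context: $K$ is the pentagonal combinatorial tiling: a 2-dimensional CW-complex homeomorphic to the open disk, obtained as follows. The subdivision rule $\omega$ acts on a pentagon with boundary vertices $v_1,\dots,v_5$ in cyclic order (indices mod 5): add a vertex $m_i$ inside each edge $v_iv_{i+1}$, interior vertices $c_1,\dots,c_5$, edges $c_ic_{i+1}$ and $c_im_i$, and replace the face by the central pentagon $c_1\cdots c_5$ and petals $v_i\,m_i\,c_i\,c_{i-1}\,m_{i-1}$. $K_0$ is one pentagon, $K_n=\omega^n(K_0)$, $K_n$ embeds onto the central superpentagon $\omega^n(\text{central face of }\omega(K_0))$ of $K_{n+1}$, and $K$ is the direct limit. $\omega(K)$ is the complex on the same space obtained by applying $\omega$ to every face of $K$; each edge of $K$ becomes two edges of $\omega(K)$, so an edge path $\gamma$ of $K$ becomes an edge path $\omega(\gamma)$ of $\omega(K)$. The length of an edge path is its number of edges. *)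

theory Defs
  imports Main "HOL-Library.FSet"
begin

(* Corner n i : the i-th corner (i<5) of the superpentagon S_n,
   where S_0 = K_0 and S_n is the central face of omega(S_(n+1)).
   Mid e : the vertex added by omega inside the edge with endpoint set e.
   Cen F e : the interior vertex c_i added by omega inside the face with vertex
   set F, the one joined to the midpoint of the edge e = v_i v_(i+1) of F. *)
datatype vx = Corner nat nat | Mid "vx fset" | Cen "vx fset" "vx fset"

(* a face is a list of its 5 boundary vertices in cyclic order *)
definition nxt :: "nat \<Rightarrow> nat" where "nxt i = (i + 1) mod 5"
definition prv :: "nat \<Rightarrow> nat" where "prv i = (i + 4) mod 5"

definition edge_of :: "vx list \<Rightarrow> nat \<Rightarrow> vx fset" where
  "edge_of F i = {|F ! i, F ! nxt i|}"

definition omega_face :: "vx list \<Rightarrow> vx list set" where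
  "omega_face F =
     (let m = (\<lambda>i. Mid (edge_of F i));
          c = (\<lambda>i. Cen (fset_of_list F) (edge_of F i))
      in insert (map c [0..<5])
           {[F ! i, m i, c i, c (prv i), m (prv i)] | i. i < 5})"

definition omega :: "vx list set \<Rightarrow> vx list set" where
  "omega C = (\<Union>F\<in>C. omega_face F)"

definition corners :: "nat \<Rightarrow> vx list" where
  "corners n = map (Corner n) [0..<5]"

(* petal i of omega(S_(n+1)), whose central face is S_n = corners n *)
definition petal :: "nat \<Rightarrow> nat \<Rightarrow> vx list" where
  "petal n i = [Corner (Suc n) i, Mid {|Corner (Suc n) i, Corner (Suc n) (nxt i)|},
                Corner n i, Corner n (prv i),
                Mid {|Corner (Suc n) (prv i), Corner (Suc n) i|}]"

(* K_n, realised so that K_n is literally the central superpentagon of K_(n+1):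
   K_(n+1) = omega^n(omega(S_(n+1))) = K_n \<union> omega^n(petals of S_(n+1)) *)
fun Kn :: "nat \<Rightarrow> vx list set" where
  "Kn 0 = {corners 0}"
| "Kn (Suc n) = Kn n \<union> (omega ^^ n) {petal n i | i. i < 5}"

(* the pentagonal tiling K (direct limit = union) and omega(K) *)
definition Kpent :: "vx list set" where "Kpent = (\<Union>n. Kn n)"
definition omegaK :: "vx list set" where "omegaK = omega Kpent"

definition verts :: "vx list set \<Rightarrow> vx set" where
  "verts C = (\<Union>F\<in>C. set F)"

definition adj :: "vx list set \<Rightarrow> vx \<Rightarrow> vx \<Rightarrow> bool" where
  "adj C a b = (a \<noteq> b \<and> (\<exists>F\<in>C. \<exists>i<5. {|a, b|} = edge_of F i))"

definition edge_path :: "vx list set \<Rightarrow> vx list \<Rightarrow> bool" where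
  "edge_path C xs = (xs \<noteq> [] \<and> hd xs \<in> verts C \<and>
                     (\<forall>i < length xs - 1. adj C (xs ! i) (xs ! Suc i)))"

definition plen :: "vx list \<Rightarrow> nat" where "plen xs = length xs - 1"

definition geodesic :: "vx list set \<Rightarrow> vx list \<Rightarrow> bool" where
  "geodesic C xs = (edge_path C xs \<and>
     (\<forall>ys. edge_path C ys \<and> hd ys = hd xs \<and> last ys = last xs \<longrightarrow> plen xs \<le> plen ys))"

fun subdiv :: "vx list \<Rightarrow> vx list" where
  "subdiv [] = []"
| "subdiv [x] = [x]"
| "subdiv (x # y # xs) = x # Mid {|x, y|} # subdiv (y # xs)"

end

theory Submission
  imports Defs
begin

text \<open>For a base vertex x let d(v) be the edge distance from x in K. Put f(v) = 2 d(v) on the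
vertices of K, f(m) = d(p) + d(q) at the midpoint m of an edge pq, and
f(c_i) = max (d(v_i) + d(v_(i+1)) - 1) (2 min_F d + 1) at the interior vertex c_i of a face F.
Since d changes by at most 1 along edges of K, a case check over the edges of omega(F) shows that
f changes by at most 1 along every edge of omega(K). Hence an edge path of omega(K) between two
vertices of K at K-distance n has length at least 2n, which omega(gamma) attains.
To read off which vertices of omega(K) are new, every vertex gets a level: vertices of K lie at
level at most 0, and each edge of K has an endpoint at level exactly 0, so the midpoints and
interior vertices added by omega lie at level 1.\<close>

lemma less_5_cases:
  assumes "k < (5::nat)"
  obtains "k = 0" | "k = 1" | "k = 2" | "k = 3" | "k = 4"
  using assms by linarith

lemma nxt_less: "nxt i < 5"
  by (simp add: nxt_def)

lemma prv_less: "prv i < 5"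
  by (simp add: prv_def)

lemma nxt_prv: "i < 5 \<Longrightarrow> nxt (prv i) = i"
  by (erule less_5_cases) (simp_all add: prv_def nxt_def)

lemma prv_nxt: "i < 5 \<Longrightarrow> prv (nxt i) = i"
  by (erule less_5_cases) (simp_all add: prv_def nxt_def)

lemma nxt_funpow_5: "i < 5 \<Longrightarrow> nxt (nxt (nxt (nxt (nxt i)))) = i"
  by (erule less_5_cases) (simp_all add: nxt_def)

lemma less_5_nxt_orbit:
  "i < 5 \<Longrightarrow> j < 5 \<Longrightarrow>
    j = i \<or> j = nxt i \<or> j = nxt (nxt i) \<or> j = nxt (nxt (nxt i)) \<or> j = nxt (nxt (nxt (nxt i)))"
  by (erule less_5_cases; erule less_5_cases) (simp_all add: nxt_def)

lemma fpair_eq_fpair: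
  "{|a, b|} = {|p, q|} \<Longrightarrow> (a = p \<and> b = q) \<or> (a = q \<and> b = p)"
  by (metis doubleton_eq_iff finsert.rep_eq bot_fset.rep_eq)

lemma adj_sym: "adj C a b \<Longrightarrow> adj C b a"
  unfolding adj_def by (auto simp: finsert_commute)

abbreviation mid :: "vx list \<Rightarrow> nat \<Rightarrow> vx" where
  "mid F i \<equiv> Mid (edge_of F i)"

abbreviation cen :: "vx list \<Rightarrow> nat \<Rightarrow> vx" where
  "cen F i \<equiv> Cen (fset_of_list F) (edge_of F i)"

abbreviation petal_face :: "vx list \<Rightarrow> nat \<Rightarrow> vx list" where
  "petal_face F i \<equiv> [F ! i, mid F i, cen F i, cen F (prv i), mid F (prv i)]"

lemma omega_face_cases:
  assumes "G \<in> omega_face F"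
  obtains "G = map (cen F) [0..<5]" | i where "i < 5" "G = petal_face F i"
  using assms unfolding omega_face_def Let_def by blast

lemma petal_face_in_omega: "F \<in> C \<Longrightarrow> i < 5 \<Longrightarrow> petal_face F i \<in> omega C"
  unfolding omega_def omega_face_def Let_def by blast

section \<open>Levels of vertices\<close>

primrec level :: "vx \<Rightarrow> int" where
  "level (Corner n i) = - int n"
| "level (Mid e) = 1 + Max (fset (fimage level e))"
| "level (Cen F e) = 1 + Max (fset (fimage level F))"

definition graded_at :: "vx list set \<Rightarrow> int \<Rightarrow> bool" where
  "graded_at C t \<longleftrightarrow> (\<forall>F\<in>C. length F = 5 \<and> (\<forall>v\<in>set F. level v \<le> t) \<and>
     (\<forall>i<5. max (level (F ! i)) (level (F ! nxt i)) = t))"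

lemma Max_level_graded_face:
  assumes "length F = 5" "\<forall>v\<in>set F. level v \<le> t" "max (level (F ! 0)) (level (F ! 1)) = t"
  shows "Max (level ` set F) = t"
proof (rule Max_eqI)
  have "F ! 0 \<in> set F" "F ! 1 \<in> set F"
    using assms(1) by auto
  then show "t \<in> level ` set F"
    using assms(3) unfolding max_def by (auto split: if_splits)
qed (use assms(2) in auto)

lemma graded_omega_face:
  assumes "graded_at {F} t" and "G \<in> omega_face F"
  shows "graded_at {G} (t + 1)"
proof -
  have len: "length F = 5" and le: "\<forall>v\<in>set F. level v \<le> t"
    and edge: "\<And>i. i < 5 \<Longrightarrow> max (level (F ! i)) (level (F ! nxt i)) = t"
    using assms(1) unfolding graded_at_def by auto
  have level_F: "level (F ! i) \<le> t" if "i < 5" for i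
    using le len that by auto
  have level_mid: "level (mid F i) = t + 1" if "i < 5" for i
    using edge[OF that] by (simp add: edge_of_def)
  have "Max (level ` set F) = t"
    using Max_level_graded_face[OF len le] edge[of 0] by (simp add: nxt_def)
  then have level_cen: "level (cen F i) = t + 1" for i
    by (simp add: fset_of_list.rep_eq)
  from assms(2) show ?thesis
  proof (cases rule: omega_face_cases)
    case 1
    then show ?thesis
      unfolding graded_at_def using level_cen nxt_less by auto
  next
    case (2 i)
    have "max (level (G ! j)) (level (G ! nxt j)) = t + 1" if "j < 5" for j
      using that 2 level_mid[OF \<open>i < 5\<close>] level_mid[OF prv_less] level_F[OF \<open>i < 5\<close>] level_cen
      by (elim less_5_cases) (simp_all del: level.simps add: nxt_def max_def)
    moreover have "\<forall>v\<in>set G. level v \<le> t + 1"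
      using 2 level_mid[OF \<open>i < 5\<close>] level_mid[OF prv_less] level_F[OF \<open>i < 5\<close>] level_cen
      by (simp del: level.simps)
    ultimately show ?thesis
      unfolding graded_at_def using 2 by simp
  qed
qed

lemma graded_at_iff_faces: "graded_at C t \<longleftrightarrow> (\<forall>F\<in>C. graded_at {F} t)"
  unfolding graded_at_def by blast

lemma graded_omega: "graded_at C t \<Longrightarrow> graded_at (omega C) (t + 1)"
  using graded_omega_face unfolding graded_at_iff_faces[of "omega C"] graded_at_iff_faces[of C]
  by (auto simp: omega_def)

lemma graded_funpow_omega: "graded_at C t \<Longrightarrow> graded_at ((omega ^^ n) C) (t + int n)"
proof (induction n)
  case (Suc n)
  then have "graded_at (omega ((omega ^^ n) C)) (t + int n + 1)"
    by (simp add: graded_omega)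
  then show ?case
    by (simp add: algebra_simps)
qed simp

lemma graded_petals: "graded_at {petal n i | i. i < 5} (- int n)"
proof -
  have "max (level (petal n i ! j)) (level (petal n i ! nxt j)) = - int n" if "j < 5" for i j
    using that by (elim less_5_cases) (simp_all add: petal_def nxt_def max_def)
  then show ?thesis
    unfolding graded_at_def by (auto simp: petal_def)
qed

lemma graded_Kn: "graded_at (Kn n) 0"
proof (induction n)
  case 0
  have "max (level (corners 0 ! j)) (level (corners 0 ! nxt j)) = 0" if "j < 5" for j
    using that nxt_less[of j] by (simp add: corners_def)
  then show ?case
    unfolding graded_at_def by (simp add: corners_def)
next
  case (Suc n)
  have "graded_at ((omega ^^ n) {petal n i | i. i < 5}) (- int n + int n)"
    by (rule graded_funpow_omega[OF graded_petals])
  with Suc show ?case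
    unfolding graded_at_def by auto
qed

lemma graded_Kpent: "graded_at Kpent 0"
  using graded_Kn unfolding graded_at_def Kpent_def by blast

lemma Kpent_face:
  assumes "F \<in> Kpent"
  shows "length F = 5" "\<forall>v\<in>set F. level v \<le> 0" "\<forall>i<5. max (level (F ! i)) (level (F ! nxt i)) = 0"
  using graded_Kpent assms unfolding graded_at_def by auto

lemma nth_in_verts_Kpent: "F \<in> Kpent \<Longrightarrow> i < 5 \<Longrightarrow> F ! i \<in> verts Kpent"
  using Kpent_face(1) unfolding verts_def by force

lemma level_verts_Kpent: "v \<in> verts Kpent \<Longrightarrow> level v \<le> 0"
  unfolding verts_def using Kpent_face(2) by blast

lemma mid_notin_verts_Kpent: "F \<in> Kpent \<Longrightarrow> i < 5 \<Longrightarrow> mid F i \<notin> verts Kpent"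
  using Kpent_face(3)[of F] level_verts_Kpent by (fastforce simp: edge_of_def)

lemma cen_notin_verts_Kpent:
  assumes "F \<in> Kpent"
  shows "cen F i \<notin> verts Kpent"
proof -
  have "Max (level ` set F) = 0"
    using Max_level_graded_face[OF Kpent_face(1,2)[OF assms]] Kpent_face(3)[OF assms, rule_format, of 0]
    by (simp add: nxt_def)
  then show ?thesis
    using level_verts_Kpent by (fastforce simp: fset_of_list.rep_eq)
qed

section \<open>Edge paths and their subdivision\<close>

lemma edge_path_iff:
  "edge_path C xs \<longleftrightarrow> xs \<noteq> [] \<and> hd xs \<in> verts C \<and> successively (adj C) xs"
  unfolding edge_path_def successively_conv_nth by (auto simp: less_diff_conv)

lemma adj_Kpent_edge:
  assumes "adj Kpent a b"
  obtains F i where "F \<in> Kpent" "i < 5" "(a = F ! i \<and> b = F ! nxt i) \<or> (a = F ! nxt i \<and> b = F ! i)"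
  using assms fpair_eq_fpair unfolding adj_def edge_of_def by metis

lemma adj_Kpent_verts: "adj Kpent a b \<Longrightarrow> b \<in> verts Kpent"
  by (erule adj_Kpent_edge) (use nth_in_verts_Kpent nxt_less in blast)

lemma last_in_verts_Kpent: "edge_path Kpent xs \<Longrightarrow> last xs \<in> verts Kpent"
proof (induction xs rule: induct_list012)
  case (3 a b ys)
  then show ?case
    by (fastforce simp: edge_path_iff dest: adj_Kpent_verts)
qed (simp_all add: edge_path_iff)

lemma verts_Kpent_subset_omegaK: "verts Kpent \<subseteq> verts omegaK"
proof
  fix v assume "v \<in> verts Kpent"
  then obtain F where F: "F \<in> Kpent" "v \<in> set F"
    unfolding verts_def by blast
  then obtain i where "i < 5" "v = F ! i"
    using Kpent_face(1)[OF F(1)] by (auto simp: in_set_conv_nth)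
  then have "v \<in> set (petal_face F i)"
    by (simp only: list.set_intros(1))
  then show "v \<in> verts omegaK"
    unfolding verts_def omegaK_def using petal_face_in_omega[OF F(1) \<open>i < 5\<close>] by blast
qed

lemma adj_omegaK_mid:
  assumes F: "F \<in> Kpent" and i: "i < 5"
  shows "adj omegaK (F ! i) (mid F i)" "adj omegaK (mid F i) (F ! nxt i)"
proof -
  have "F ! i \<noteq> mid F i" "mid F i \<noteq> F ! nxt i"
    using mid_notin_verts_Kpent[OF F i] nth_in_verts_Kpent[OF F] i nxt_less by metis+
  have "{|F ! i, mid F i|} = edge_of (petal_face F i) 0"
    by (simp add: edge_of_def nxt_def)
  then have "\<exists>j<5. {|F ! i, mid F i|} = edge_of (petal_face F i) j"
    by (intro exI[of _ 0]) simp
  then show "adj omegaK (F ! i) (mid F i)"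
    unfolding adj_def omegaK_def using \<open>F ! i \<noteq> mid F i\<close> petal_face_in_omega[OF F i] by blast
  have "{|mid F i, F ! nxt i|} = edge_of (petal_face F (nxt i)) 4"
    using prv_nxt[OF i] by (simp add: edge_of_def nxt_def)
  then have "\<exists>j<5. {|mid F i, F ! nxt i|} = edge_of (petal_face F (nxt i)) j"
    by (intro exI[of _ 4]) simp
  then show "adj omegaK (mid F i) (F ! nxt i)"
    unfolding adj_def omegaK_def using \<open>mid F i \<noteq> F ! nxt i\<close> petal_face_in_omega[OF F nxt_less]
    by blast
qed

lemma adj_omegaK_subdiv:
  assumes "adj Kpent a b"
  shows "adj omegaK a (Mid {|a, b|})" "adj omegaK (Mid {|a, b|}) b"
proof -
  obtain F i where "F \<in> Kpent" "i < 5" "(a = F ! i \<and> b = F ! nxt i) \<or> (a = F ! nxt i \<and> b = F ! i)"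
    using assms by (rule adj_Kpent_edge)
  then show "adj omegaK a (Mid {|a, b|})" "adj omegaK (Mid {|a, b|}) b"
    using adj_omegaK_mid adj_sym by (auto simp: edge_of_def finsert_commute)
qed

lemma subdiv_Cons: "\<exists>zs. subdiv (y # xs) = y # zs"
  by (cases xs) auto

lemma successively_subdiv:
  "successively (adj Kpent) xs \<Longrightarrow> successively (adj omegaK) (subdiv xs)"
proof (induction xs rule: subdiv.induct)
  case (3 x y xs)
  obtain zs where "subdiv (y # xs) = y # zs"
    using subdiv_Cons by blast
  with 3 show ?case
    using adj_omegaK_subdiv by auto
qed auto

lemma hd_subdiv: "xs \<noteq> [] \<Longrightarrow> hd (subdiv xs) = hd xs"
  by (induction xs rule: subdiv.induct) auto

lemma last_subdiv: "last (subdiv xs) = last xs"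
proof (induction xs rule: subdiv.induct)
  case (3 x y xs)
  then show ?case
    using subdiv_Cons[of y xs] by auto
qed auto

lemma length_subdiv: "length (subdiv xs) = 2 * length xs - 1"
  by (induction xs rule: subdiv.induct) auto

lemma plen_subdiv: "plen (subdiv xs) = 2 * plen xs"
  by (simp add: plen_def length_subdiv)

lemma subdiv_eq_Nil_iff: "subdiv xs = [] \<longleftrightarrow> xs = []"
  by (cases xs rule: subdiv.cases) auto

lemma edge_path_subdiv: "edge_path Kpent xs \<Longrightarrow> edge_path omegaK (subdiv xs)"
  unfolding edge_path_iff
  using successively_subdiv hd_subdiv verts_Kpent_subset_omegaK subdiv_eq_Nil_iff by auto

section \<open>Edge distance\<close>

definition walk :: "vx list set \<Rightarrow> vx \<Rightarrow> nat \<Rightarrow> vx \<Rightarrow> bool" where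
  "walk C x k v \<longleftrightarrow>
     (\<exists>ys. ys \<noteq> [] \<and> successively (adj C) ys \<and> hd ys = x \<and> last ys = v \<and> plen ys = k)"

text \<open>Junk value 0 when v is not reachable from x.\<close>

definition edge_dist :: "vx list set \<Rightarrow> vx \<Rightarrow> vx \<Rightarrow> nat" where
  "edge_dist C x v = (if \<exists>k. walk C x k v then LEAST k. walk C x k v else 0)"

lemma walk_snoc: "walk C x k v \<Longrightarrow> adj C v w \<Longrightarrow> walk C x (Suc k) w"
  unfolding walk_def plen_def
  by (elim exE conjE, rule_tac x = "ys @ [w]" in exI) (auto simp: successively_append_iff)

lemma edge_dist_adj_le:
  assumes "adj C v w"
  shows "edge_dist C x w \<le> edge_dist C x v + 1"
proof (cases "\<exists>k. walk C x k v")
  case True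
  then have "walk C x (edge_dist C x v) v"
    unfolding edge_dist_def by (auto intro: LeastI_ex)
  then have "walk C x (Suc (edge_dist C x v)) w"
    using walk_snoc assms by blast
  then show ?thesis
    unfolding edge_dist_def[of C x w] by (auto intro: Least_le)
next
  case False
  then have "\<not> (\<exists>k. walk C x k w)"
    using walk_snoc adj_sym[OF assms] by blast
  then show ?thesis
    unfolding edge_dist_def by simp
qed

lemma edge_dist_adj: "adj C v w \<Longrightarrow> \<bar>int (edge_dist C x v) - int (edge_dist C x w)\<bar> \<le> 1"
  using edge_dist_adj_le[of C v w x] edge_dist_adj_le[OF adj_sym, of C v w x] by linarith

lemma edge_dist_eqI:
  assumes "walk C x k v" and "\<And>j. walk C x j v \<Longrightarrow> k \<le> j"
  shows "edge_dist C x v = k"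
proof -
  have "(LEAST j. walk C x j v) = k"
    by (rule Least_equality) (use assms in simp_all)
  then show ?thesis
    using assms(1) unfolding edge_dist_def by auto
qed

lemma edge_dist_self: "edge_dist C x x = 0"
proof (rule edge_dist_eqI)
  show "walk C x 0 x"
    unfolding walk_def plen_def by (rule exI[of _ "[x]"]) simp
qed simp

lemma edge_dist_geodesic:
  assumes "geodesic C \<gamma>"
  shows "edge_dist C (hd \<gamma>) (last \<gamma>) = plen \<gamma>"
proof (rule edge_dist_eqI)
  have \<gamma>: "\<gamma> \<noteq> []" "hd \<gamma> \<in> verts C" "successively (adj C) \<gamma>"
    using assms unfolding geodesic_def edge_path_iff by auto
  then show "walk C (hd \<gamma>) (plen \<gamma>) (last \<gamma>)"
    unfolding walk_def by blast
  fix k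
  assume "walk C (hd \<gamma>) k (last \<gamma>)"
  then obtain ys where ys: "edge_path C ys" "hd ys = hd \<gamma>" "last ys = last \<gamma>" "plen ys = k"
    unfolding walk_def edge_path_iff using \<gamma>(2) by auto
  then show "plen \<gamma> \<le> k"
    using assms unfolding geodesic_def by blast
qed

section \<open>A 1-Lipschitz potential on omega(K)\<close>

abbreviation dK :: "vx \<Rightarrow> vx \<Rightarrow> int" where
  "dK x v \<equiv> int (edge_dist Kpent x v)"

definition potential :: "vx \<Rightarrow> vx \<Rightarrow> int" where
  "potential x z = (if z \<in> verts Kpent then 2 * dK x z else (case z of
      Mid e \<Rightarrow> Min (dK x ` fset e) + Max (dK x ` fset e)
    | Cen F e \<Rightarrow> max (Min (dK x ` fset e) + Max (dK x ` fset e) - 1) (2 * Min (dK x ` fset F) + 1)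
    | Corner _ _ \<Rightarrow> 0))"

definition face_min :: "vx \<Rightarrow> vx list \<Rightarrow> int" where
  "face_min x F = Min (dK x ` set F)"

lemma potential_verts: "v \<in> verts Kpent \<Longrightarrow> potential x v = 2 * dK x v"
  unfolding potential_def by simp

lemma potential_mid:
  assumes "F \<in> Kpent" "i < 5"
  shows "potential x (mid F i) = dK x (F ! i) + dK x (F ! nxt i)"
  using mid_notin_verts_Kpent[OF assms]
  by (simp add: potential_def edge_of_def min_def max_def)

lemma potential_cen:
  assumes "F \<in> Kpent"
  shows "potential x (cen F i) = max (dK x (F ! i) + dK x (F ! nxt i) - 1) (2 * face_min x F + 1)"
  using cen_notin_verts_Kpent[OF assms]
  by (simp add: potential_def edge_of_def face_min_def fset_of_list.rep_eq min_def max_def)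

lemma face_min_le: "F \<in> Kpent \<Longrightarrow> i < 5 \<Longrightarrow> face_min x F \<le> dK x (F ! i)"
  unfolding face_min_def using Kpent_face(1) by simp

lemma face_min_attained:
  assumes "F \<in> Kpent"
  obtains j where "j < 5" "face_min x F = dK x (F ! j)"
proof -
  have "set F \<noteq> {}"
    using Kpent_face(1)[OF assms] by auto
  then have "face_min x F \<in> dK x ` set F"
    unfolding face_min_def by (intro Min_in) auto
  then show ?thesis
    using that Kpent_face(1)[OF assms] by (auto simp: in_set_conv_nth)
qed

lemma dK_face_edge:
  assumes "F \<in> Kpent" "i < 5"
  shows "\<bar>dK x (F ! i) - dK x (F ! nxt i)\<bar> \<le> 1"
proof (cases "F ! i = F ! nxt i")
  case False
  then have "adj Kpent (F ! i) (F ! nxt i)"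
    unfolding adj_def edge_of_def using assms by blast
  then show ?thesis
    by (rule edge_dist_adj)
qed simp

lemma mid_cen_potential_step:
  fixes a b \<mu> :: int
  assumes "\<mu> \<le> a" "\<mu> \<le> b"
  shows "\<bar>max (a + b - 1) (2 * \<mu> + 1) - (a + b)\<bar> \<le> 1"
  using assms by linarith

text \<open>a, ..., e are the distances at the vertices of a face in cyclic order, \<mu> their minimum.\<close>

lemma cen_cen_potential_step:
  fixes a b c d e \<mu> :: int
  assumes "\<bar>a - b\<bar> \<le> 1" "\<bar>b - c\<bar> \<le> 1" "\<bar>c - d\<bar> \<le> 1" "\<bar>d - e\<bar> \<le> 1" "\<bar>e - a\<bar> \<le> 1"
    and "\<mu> \<le> a" "\<mu> \<le> b" "\<mu> \<le> c" "\<mu> \<le> d" "\<mu> \<le> e"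
    and "\<mu> = a \<or> \<mu> = b \<or> \<mu> = c \<or> \<mu> = d \<or> \<mu> = e"
  shows "\<bar>max (a + b - 1) (2 * \<mu> + 1) - max (b + c - 1) (2 * \<mu> + 1)\<bar> \<le> 1"
  using assms unfolding max_def abs_le_iff by (elim disjE; simp split: if_split; linarith)

lemma potential_cen_nxt:
  assumes F: "F \<in> Kpent" and i: "i < 5"
  shows "\<bar>potential x (cen F i) - potential x (cen F (nxt i))\<bar> \<le> 1"
proof -
  define d where "d j = dK x (F ! j)" for j
  let ?i1 = "nxt i" let ?i2 = "nxt ?i1" let ?i3 = "nxt ?i2" let ?i4 = "nxt ?i3"
  have edges: "\<bar>d i - d ?i1\<bar> \<le> 1" "\<bar>d ?i1 - d ?i2\<bar> \<le> 1" "\<bar>d ?i2 - d ?i3\<bar> \<le> 1"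
      "\<bar>d ?i3 - d ?i4\<bar> \<le> 1" "\<bar>d ?i4 - d i\<bar> \<le> 1"
    unfolding d_def using dK_face_edge[OF F] i nxt_less nxt_funpow_5[OF i] by metis+
  have lower: "face_min x F \<le> d i" "face_min x F \<le> d ?i1" "face_min x F \<le> d ?i2"
      "face_min x F \<le> d ?i3" "face_min x F \<le> d ?i4"
    unfolding d_def using face_min_le[OF F] i nxt_less by simp_all
  obtain j where "j < 5" "face_min x F = d j"
    using face_min_attained[OF F] unfolding d_def by blast
  then have attained: "face_min x F = d i \<or> face_min x F = d ?i1 \<or> face_min x F = d ?i2 \<or>
      face_min x F = d ?i3 \<or> face_min x F = d ?i4"
    using less_5_nxt_orbit[OF i] by metis
  show ?thesis
    using cen_cen_potential_step[OF edges lower attained] potential_cen[OF F]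
    unfolding d_def by simp
qed

lemma potential_omega_face:
  assumes F: "F \<in> Kpent" and G: "G \<in> omega_face F" and j: "j < 5"
  shows "\<bar>potential x (G ! j) - potential x (G ! nxt j)\<bar> \<le> 1"
  using G
proof (cases rule: omega_face_cases)
  case 1
  then show ?thesis
    using potential_cen_nxt[OF F j] j nxt_less[of j] by simp
next
  case (2 i)
  let ?p = "prv i"
  have p: "?p < 5" "nxt ?p = i"
    using prv_less nxt_prv[OF \<open>i < 5\<close>] by simp_all
  have corner_mid: "\<bar>potential x (F ! k) - potential x (mid F k)\<bar> \<le> 1"
    and mid_corner: "\<bar>potential x (mid F k) - potential x (F ! nxt k)\<bar> \<le> 1"
    and mid_cen: "\<bar>potential x (mid F k) - potential x (cen F k)\<bar> \<le> 1" if "k < 5" for k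
    using that potential_verts nth_in_verts_Kpent[OF F] potential_mid[OF F] potential_cen[OF F]
      dK_face_edge[OF F that, of x] nxt_less
      mid_cen_potential_step[OF face_min_le[OF F that] face_min_le[OF F nxt_less]]
    by (simp_all add: abs_minus_commute)
  have "\<bar>potential x (F ! i) - potential x (mid F i)\<bar> \<le> 1"
    "\<bar>potential x (mid F i) - potential x (cen F i)\<bar> \<le> 1"
    "\<bar>potential x (cen F i) - potential x (cen F ?p)\<bar> \<le> 1"
    "\<bar>potential x (cen F ?p) - potential x (mid F ?p)\<bar> \<le> 1"
    "\<bar>potential x (mid F ?p) - potential x (F ! i)\<bar> \<le> 1"
    using corner_mid[OF \<open>i < 5\<close>] mid_cen[OF \<open>i < 5\<close>] potential_cen_nxt[OF F p(1), of x]
      mid_cen[OF p(1)] mid_corner[OF p(1)] p(2)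
    by (simp_all add: abs_minus_commute)
  then show ?thesis
    using j 2 by (elim less_5_cases) (simp_all add: nxt_def)
qed

lemma potential_adj_omegaK:
  assumes "adj omegaK a b"
  shows "potential x b \<le> potential x a + 1"
proof -
  obtain G j where G: "G \<in> omegaK" "j < 5" and ab: "{|a, b|} = edge_of G j"
    using assms unfolding adj_def by blast
  obtain F where F: "F \<in> Kpent" "G \<in> omega_face F"
    using G(1) unfolding omegaK_def omega_def by blast
  have "\<bar>potential x (G ! j) - potential x (G ! nxt j)\<bar> \<le> 1"
    by (rule potential_omega_face[OF F G(2)])
  moreover have "(a = G ! j \<and> b = G ! nxt j) \<or> (a = G ! nxt j \<and> b = G ! j)"
    using fpair_eq_fpair[OF ab[unfolded edge_of_def]] .
  ultimately show ?thesis
    by (elim disjE conjE) (simp_all add: abs_le_iff)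
qed

lemma successively_lipschitz_last:
  fixes g :: "'a \<Rightarrow> int"
  assumes "\<And>a b. R a b \<Longrightarrow> g b \<le> g a + 1" and "successively R ys" "ys \<noteq> []"
  shows "g (last ys) \<le> g (hd ys) + int (length ys - 1)"
  using assms(2,3)
proof (induction ys rule: induct_list012)
  case (3 a b ys)
  then show ?case
    using assms(1)[of a b] by simp
qed simp_all

lemma edge_path_omegaK_length:
  assumes "edge_path omegaK ys" "hd ys \<in> verts Kpent" "last ys \<in> verts Kpent"
  shows "2 * edge_dist Kpent (hd ys) (last ys) \<le> plen ys"
proof -
  have ys: "successively (adj omegaK) ys" "ys \<noteq> []"
    using assms(1) unfolding edge_path_iff by blast+
  have "potential (hd ys) (last ys) \<le> potential (hd ys) (hd ys) + int (length ys - 1)"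
    by (rule successively_lipschitz_last[OF potential_adj_omegaK ys])
  then show ?thesis
    using assms(2,3) by (simp add: potential_verts edge_dist_self plen_def)
qed

theorem mainTheorem20:
  fixes \<gamma> :: "vx list" and n :: nat
  assumes "edge_path Kpent \<gamma>" and "plen \<gamma> = n" and "geodesic Kpent \<gamma>"
  shows "edge_path omegaK (subdiv \<gamma>) \<and> plen (subdiv \<gamma>) = 2 * n \<and> geodesic omegaK (subdiv \<gamma>)"
proof -
  have \<gamma>: "\<gamma> \<noteq> []" "hd \<gamma> \<in> verts Kpent" "last \<gamma> \<in> verts Kpent"
    using assms(1) last_in_verts_Kpent unfolding edge_path_iff by auto
  have path: "edge_path omegaK (subdiv \<gamma>)"
    using edge_path_subdiv[OF assms(1)] .
  have len: "plen (subdiv \<gamma>) = 2 * n"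
    using plen_subdiv assms(2) by simp
  have "plen (subdiv \<gamma>) \<le> plen ys"
    if "edge_path omegaK ys" "hd ys = hd (subdiv \<gamma>)" "last ys = last (subdiv \<gamma>)" for ys
  proof -
    have ends: "hd ys = hd \<gamma>" "last ys = last \<gamma>"
      using that(2,3) hd_subdiv[OF \<gamma>(1)] last_subdiv by simp_all
    have "2 * edge_dist Kpent (hd \<gamma>) (last \<gamma>) \<le> plen ys"
      using edge_path_omegaK_length[OF that(1)] \<gamma>(2,3) unfolding ends by blast
    then show ?thesis
      unfolding len edge_dist_geodesic[OF assms(3)] assms(2) .
  qed
  with path len show ?thesis
    unfolding geodesic_def by blast
qed

end
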